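(* Assume the standing setting below and run the DMFW algorithm with $\gamma_k=\frac{2}{k+1}$ and $\eta_k=\frac{2}{k+2}$. Then for every $i\in\mathcal N$ and $k\ge1$, $$\mathbb E\|p_k^i-\bar y_k\|^2\le\frac{4C_2}{(k+2)^2}.$$
   Context: Setting. There are $n$ agents $\mathcal N=\{1,\dots,n\}$ connected by a connected graph $\mathcal G=(\mathcal N,\mathcal E)$ with weight matrix $C=[c_{ij}]\in\mathbb R^{n\times n}$, where $c_{ij}\ge 0$ and $c_{ij}=0$ whenever $j\ne i$ and $(i,j)\notin\mathcal E$. $C$ is doubly stochastic, i.e. all row sums and all column sums equal $1$. Let $\lambda$ be the second largest eigenvalue of $C$ in magnitude. It is assumed that $|\lambda|<1$ and that for all vectors $x^1,\dots,x^n\in\mathbb R^p$, with $\bar x=\frac1n\sum_i x^i$ and $\hat x^i=\sum_j c_{ij}x^j$, one has $\big(\sum_i\|\hat x^i-\bar x\|^2\big)^{1/2}\le|\lambda|\big(\sum_i\|x^i-\bar x\|^2\big)^{1/2}$. Let $k_0$ be the smallest positive integer with $|\lambda|\le (k_0/(k_0+1))^2$. Problem data. $\mathcal X\subset\mathbb R^p$ is convex and compact with diameter $D$, i.e. $\|x-x'\|\le D$ for all $x,x'\in\mathcal X$. For each $i$, $\xi^i$ is a random variable. The function $f_i(\cdot,\xi)$ is differentiable with $L$-Lipschitz gradient for every $\xi$. $F_i(x)=\mathbb E[f_i(x,\xi^i)]$ is differentiable with $\nabla F_i(x)=\mathbb E[\nabla f_i(x,\xi^i)]$ and $L$-Lipschitz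 gradient. For all $x\in\mathcal X$ and $i$, $\mathbb E\|\nabla F_i(x)-\nabla f_i(x,\xi^i)\|^2\le\delta^2$. Set $F=\frac1n\sum_{i=1}^nF_i$. $G>0$ is a constant with $\mathbb E\|\nabla f_i(x,\xi^i)\|^2\le G^2$ and $\mathbb E\|\nabla f_i(x,\xi^i)\|\le G$ for all $x\in\mathcal X$ and $i\in\mathcal N$. DMFW algorithm. Fix step sizes $\gamma_k,\eta_k\in(0,1]$ and deterministic initial points $x_1^i\in\mathcal X$. The samples $\xi_k^i$ ($k\ge1$, $i\in\mathcal N$) are mutually independent, and $\xi_k^i$ has the distribution of $\xi^i$. For $k=1,2,\dots$ and each $i$: - $\hat x_k^i=\sum_{j=1}^n c_{ij}x_k^j$. - For $k=1$: $y_1^i=s_1^i=\nabla f_i(\hat x_1^i,\xi_1^i)$. For $k\ge2$: $y_k^i=(1-\gamma_k)y_{k-1}^i+\nabla f_i(\hat x_k^i,\xi_k^i)-(1-\gamma_k)\nabla f_i(\hat x_{k-1}^i,\xi_k^i)$ and $s_k^i=\sum_j c_{ij}s_{k-1}^j+y_k^i-y_{k-1}^i$. - $p_k^i=\sum_j c_{ij}s_k^j$. - $\theta_k^i\in\arg\min_{\phi\in\mathcal X}\langle p_k^i,\phi\rangle$. - $x_{k+1}^i=\hat x_k^i+\eta_k(\theta_k^i-\hat x_k^i)$. Notation: $\bar x_k=\frac1n\sum_i x_k^i$, $\bar y_k=\frac1n\sum_i y_k^i$. Constants: - $C_1=k_0\sqrt n D$. - $\psi=\max\{\max_i\mathbb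 E\|y_1^i\|,\ 2G+2L(D+2C_1)\}$. - $\hat\psi=\max\{\max_i\mathbb E\|y_1^i\|^2,\ 4L(D+2C_1)\psi+4G\psi+8G^2+8L^2(D+2C_1)^2\}$. - $C_2=k_0^3(4n)^{k_0}n\big(12L^2(D+2C_1)^2+12(G^2+\hat\psi)\big)$. *)

theory Defs
  imports "HOL-Probability.Probability" "Jordan_Normal_Form.Char_Poly"
begin

text \<open>Second largest eigenvalue modulus of the real n x n matrix C = [c i j] (i, j < n):
  the characteristic polynomial of C (viewed over the complex numbers) has exactly n roots
  counted with multiplicity; we sort their moduli in decreasing order and take the second one.\<close>
definition slem :: "nat \<Rightarrow> (nat \<Rightarrow> nat \<Rightarrow> real) \<Rightarrow> real" where
  "slem n c = rev (sorted_list_of_multiset (image_mset cmod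
      (proots (char_poly (Matrix.mat n n (\<lambda>(i,j). complex_of_real (c i j))))))) ! 1"

definition k0_of :: "real \<Rightarrow> nat" where
  "k0_of lam = (LEAST k::nat. 0 < k \<and> \<bar>lam\<bar> \<le> (real k / (real k + 1))^2)"

definition mix :: "nat \<Rightarrow> (nat \<Rightarrow> nat \<Rightarrow> real) \<Rightarrow> (nat \<Rightarrow> 'e::real_vector) \<Rightarrow> nat \<Rightarrow> 'e" where
  "mix n c v i = (\<Sum>j<n. c i j *\<^sub>R v j)"

definition avg :: "nat \<Rightarrow> (nat \<Rightarrow> 'e::real_vector) \<Rightarrow> 'e" where
  "avg n v = (1 / real n) *\<^sub>R (\<Sum>i<n. v i)"

text \<open>The argument m corresponds to iteration k = m + 1;
  the result is the triple (x_k, y_k, s_k) of agent-indexed vectors.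
  g i x \<xi> is the stochastic gradient nabla f_i(x, \<xi>), lmo p is the chosen minimiser
  theta in argmin_{phi in X} <p, phi>, smp k i is the sample \<xi>_k^i,
  gam and eta are the step sizes gamma_k, eta_k.\<close>
fun dmfw_run :: "nat \<Rightarrow> (nat \<Rightarrow> nat \<Rightarrow> real) \<Rightarrow> (nat \<Rightarrow> 'e::real_vector \<Rightarrow> 'b \<Rightarrow> 'e)
    \<Rightarrow> ('e \<Rightarrow> 'e) \<Rightarrow> (nat \<Rightarrow> 'e) \<Rightarrow> (nat \<Rightarrow> real) \<Rightarrow> (nat \<Rightarrow> real) \<Rightarrow> (nat \<Rightarrow> nat \<Rightarrow> 'b)
    \<Rightarrow> nat \<Rightarrow> (nat \<Rightarrow> 'e) \<times> (nat \<Rightarrow> 'e) \<times> (nat \<Rightarrow> 'e)" where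
  "dmfw_run n c g lmo x1 gam eta smp 0 =
     (x1, (\<lambda>i. g i (mix n c x1 i) (smp 1 i)), (\<lambda>i. g i (mix n c x1 i) (smp 1 i)))"
| "dmfw_run n c g lmo x1 gam eta smp (Suc m) =
     (let (x, y, s) = dmfw_run n c g lmo x1 gam eta smp m;
          k = Suc m;
          xh = mix n c x;
          p = mix n c s;
          x' = (\<lambda>i. xh i + eta k *\<^sub>R (lmo (p i) - xh i));
          xh' = mix n c x';
          y' = (\<lambda>i. (1 - gam (k + 1)) *\<^sub>R y i + g i (xh' i) (smp (k + 1) i)
                    - (1 - gam (k + 1)) *\<^sub>R g i (xh i) (smp (k + 1) i));
          s' = (\<lambda>i. mix n c s i + y' i - y i)
      in (x', y', s'))"

definition dmfw_x where "dmfw_x n c g lmo x1 gam eta smp k = fst (dmfw_run n c g lmo x1 gam eta smp (k - 1))"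
definition dmfw_y where "dmfw_y n c g lmo x1 gam eta smp k = fst (snd (dmfw_run n c g lmo x1 gam eta smp (k - 1)))"
definition dmfw_s where "dmfw_s n c g lmo x1 gam eta smp k = snd (snd (dmfw_run n c g lmo x1 gam eta smp (k - 1)))"
definition dmfw_p where "dmfw_p n c g lmo x1 gam eta smp k = mix n c (dmfw_s n c g lmo x1 gam eta smp k)"

end

theory Submission
  imports Defs
begin

text \<open>The disagreement of the iterates x_k contracts by the factor |lambda|
  per round and is perturbed by eta_k = O(1/k), so it is O(k0/k); hence consecutive mixed points
  move by O(1/k).  With Lipschitz sample gradients, the momentum variable y_k is then dominated by a
  running average of b_j = |grad f_i(x_1, xi_j)| + const, and y_{k+1} - y_k = O(b/k).  Gradient
  tracking gives e_{k+1} <= |lambda| e_k + d_{k+1} for the disagreement e_k of s_k, where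
  d_j = |y_j - y_{j-1}|, so e_k <= sum_j |lambda|^(k-j) d_j.  Cauchy-Schwarz with the weights
  1/(j+1) and (j+1) d_j splits e_k^2 into the deterministic factor
  sum_j |lambda|^(k-j)/(j+1)^2 = O(k0^3/k^2) and a factor whose expectation is
  O(k0 n (G^2 + L^2 (D + 2 C1)^2)).\<close>

section \<open>Discounted sums\<close>

definition discounted_sum :: "real \<Rightarrow> (nat \<Rightarrow> real) \<Rightarrow> nat \<Rightarrow> real" where
  "discounted_sum l a k = (\<Sum>j=1..k. l ^ (k - j) * a j)"

lemma discounted_sum_Suc:
  "discounted_sum l a (Suc k) = l * discounted_sum l a k + a (Suc k)"
proof -
  have "(\<Sum>j=1..k. l ^ (Suc k - j) * a j) = (\<Sum>j=1..k. l * (l ^ (k - j) * a j))"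
    by (intro sum.cong) (auto simp: Suc_diff_le)
  then show ?thesis
    by (simp add: discounted_sum_def sum_distrib_left)
qed

lemma discounted_sum_nonneg:
  "0 \<le> l \<Longrightarrow> (\<And>j. 0 \<le> a j) \<Longrightarrow> 0 \<le> discounted_sum l a k"
  unfolding discounted_sum_def by (intro sum_nonneg) auto

lemma discounted_sum_mono:
  assumes "0 \<le> l" and "\<And>j. 1 \<le> j \<Longrightarrow> j \<le> k \<Longrightarrow> a j \<le> b j"
  shows "discounted_sum l a k \<le> discounted_sum l b k"
  unfolding discounted_sum_def using assms by (intro sum_mono mult_left_mono) auto

lemma discounted_sum_cmult:
  "discounted_sum l (\<lambda>j. r * a j) k = r * discounted_sum l a k"
  by (simp add: discounted_sum_def sum_distrib_left ac_simps)

lemma le_discounted_sum: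
  fixes u :: "nat \<Rightarrow> real"
  assumes "0 \<le> l" and "u 1 \<le> a 1"
    and step: "\<And>k. 1 \<le> k \<Longrightarrow> u (Suc k) \<le> l * u k + a (Suc k)"
    and "1 \<le> k"
  shows "u k \<le> discounted_sum l a k"
  using \<open>1 \<le> k\<close>
proof (induction k rule: nat_induct_at_least)
  case base
  then show ?case using assms(2) by (simp add: discounted_sum_def)
next
  case (Suc k)
  then show ?case
    using step[OF Suc.hyps] mult_left_mono[OF Suc.IH \<open>0 \<le> l\<close>] by (simp add: discounted_sum_Suc)
qed

lemma discounted_sum_sq_le:
  assumes "0 \<le> l" and "\<And>j. r j \<noteq> 0"
  shows "(discounted_sum l a k)\<^sup>2
    \<le> discounted_sum l (\<lambda>j. 1 / (r j)\<^sup>2) k * discounted_sum l (\<lambda>j. (r j * a j)\<^sup>2) k"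
proof -
  define w where "w j = sqrt (l ^ (k - j))" for j
  have w_sq: "(w j)\<^sup>2 = l ^ (k - j)" for j
    using \<open>0 \<le> l\<close> by (simp add: w_def)
  have "discounted_sum l a k = (\<Sum>j=1..k. (w j / r j) * (w j * r j * a j))"
    unfolding discounted_sum_def w_sq[symmetric] using assms(2)
    by (intro sum.cong) (simp_all add: power2_eq_square)
  also have "(\<dots>)\<^sup>2 \<le> (\<Sum>j=1..k. (w j / r j)\<^sup>2) * (\<Sum>j=1..k. (w j * r j * a j)\<^sup>2)"
    by (rule Cauchy_Schwarz_ineq_sum)
  also have "\<dots> = discounted_sum l (\<lambda>j. 1 / (r j)\<^sup>2) k * discounted_sum l (\<lambda>j. (r j * a j)\<^sup>2) k"
    unfolding discounted_sum_def by (simp add: power_divide power_mult_distrib w_sq mult.assoc)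
  finally show ?thesis .
qed

lemma le_of_le_ratio_sq:
  "l \<le> (real m / (real m + 1))\<^sup>2 \<Longrightarrow> l \<le> real m / (real m + 1)"
proof -
  assume "l \<le> (real m / (real m + 1))\<^sup>2"
  moreover have "(real m / (real m + 1))\<^sup>2 \<le> real m / (real m + 1)"
    unfolding power2_eq_square by (rule mult_left_le_one_le) auto
  ultimately show ?thesis by linarith
qed

lemma le_one_of_le_ratio_sq:
  "l \<le> (real m / (real m + 1))\<^sup>2 \<Longrightarrow> l \<le> 1"
  using le_of_le_ratio_sq[of l m] by (simp add: order_trans)

lemma ratio_sq_mult_le:
  assumes "0 \<le> l" "l \<le> (real k0 / (real k0 + 1))\<^sup>2" "k0 \<le> m"
  shows "l * (real k0 + 1) * (real m + 1) \<le> real k0 * real m"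
proof -
  have "real k0 * real k0 \<le> real k0 * real m"
    using assms(3) by (intro mult_left_mono) auto
  then have km: "real k0 * real k0 * (real m + 1) \<le> real k0 * real m * (real k0 + 1)"
    by (simp add: algebra_simps)
  have "l * (real k0 + 1) * (real m + 1) \<le> (real k0 / (real k0 + 1))\<^sup>2 * (real k0 + 1) * (real m + 1)"
    using assms(2) by (intro mult_right_mono) auto
  also have "\<dots> = real k0 * real k0 * (real m + 1) / (real k0 + 1)"
    by (simp add: power2_eq_square)
  also have "\<dots> \<le> real k0 * real m"
    using km by (simp add: field_simps)
  finally show ?thesis .
qed

lemma discounted_sum_one_le:
  assumes "0 \<le> l" "l \<le> (real k0 / (real k0 + 1))\<^sup>2"
  shows "discounted_sum l (\<lambda>_. 1) k \<le> real k0 + 1"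
proof (induction k)
  case 0
  then show ?case by (simp add: discounted_sum_def)
next
  case (Suc k)
  have "l * (real k0 + 1) \<le> real k0"
    using le_of_le_ratio_sq[OF assms(2)] by (simp add: field_simps)
  then show ?case
    using mult_left_mono[OF Suc.IH assms(1)] by (simp add: discounted_sum_Suc)
qed

text \<open>A contraction driven by an input of order 1/k decays like 1/k.  The a priori bound
  u k \<le> a is needed for the rounds k + 1 < k0, where l may exceed (k + 1)/(k + 2).\<close>
lemma perturbed_contraction_le:
  fixes u :: "nat \<Rightarrow> real"
  assumes l: "0 \<le> l" "l \<le> (real k0 / (real k0 + 1))\<^sup>2" and "0 \<le> a"
    and bounded: "\<And>k. 1 \<le> k \<Longrightarrow> u k \<le> a"
    and step: "\<And>k. 1 \<le> k \<Longrightarrow> u (Suc k) \<le> l * u k + 2 / (real k + 2) * a"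
    and "1 \<le> k"
  shows "u k \<le> 2 * (real k0 + 1) * a / (real k + 1)"
  using \<open>1 \<le> k\<close>
proof (induction k rule: nat_induct_at_least)
  case base
  have "1 * a \<le> (real k0 + 1) * a"
    using \<open>0 \<le> a\<close> by (intro mult_right_mono) auto
  then have "u 1 \<le> (real k0 + 1) * a"
    using bounded[of 1] by simp
  then show ?case by (simp add: algebra_simps)
next
  case (Suc k)
  show ?case
  proof (cases "k0 \<le> k + 1")
    case True
    have "l * (2 * (real k0 + 1) * a / (real k + 1))
        = l * (real k0 + 1) * (real k + 2) * (2 * a / ((real k + 1) * (real k + 2)))"
      by (simp add: divide_simps)
    also have "\<dots> \<le> real k0 * (real k + 1) * (2 * a / ((real k + 1) * (real k + 2)))"
      using ratio_sq_mult_le[OF l True] \<open>0 \<le> a\<close> by (intro mult_right_mono) (auto simp: add.commute)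
    also have "\<dots> = 2 * real k0 * a / (real k + 2)"
      by (simp add: divide_simps)
    finally have "l * (2 * (real k0 + 1) * a / (real k + 1)) \<le> 2 * real k0 * a / (real k + 2)" .
    moreover have "u (Suc k) \<le> l * (2 * (real k0 + 1) * a / (real k + 1)) + 2 / (real k + 2) * a"
      using step[OF Suc.hyps] mult_left_mono[OF Suc.IH l(1)] by linarith
    moreover have "2 * real k0 * a / (real k + 2) + 2 / (real k + 2) * a
        = 2 * (real k0 + 1) * a / (real (Suc k) + 1)"
      by (simp add: divide_simps) (simp add: algebra_simps)
    ultimately show ?thesis by linarith
  next
    case False
    then have "a * (real k + 2) \<le> a * (2 * (real k0 + 1))"
      using \<open>0 \<le> a\<close> by (intro mult_left_mono) auto
    then have "a \<le> 2 * (real k0 + 1) * a / (real (Suc k) + 1)"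
      by (simp add: field_simps)
    then show ?thesis using bounded[of "Suc k"] by simp
  qed
qed

lemma inv_sq_contraction_step:
  assumes l: "0 \<le> l" "l \<le> (real k0 / (real k0 + 1))\<^sup>2" and "1 \<le> k0" and "2 * k0 \<le> k + 1"
  shows "l * (6 * real k0 ^ 3) + 1 \<le> 6 * real k0 ^ 3 * ((real k + 2) / (real k + 3))\<^sup>2"
proof -
  define t where "t = 1 / (real k0 + 1)"
  have t: "0 < t" "t \<le> 1 / 2"
    using \<open>1 \<le> k0\<close> by (auto simp: t_def field_simps)
  have "real (2 * k0) \<le> real (k + 1)"
    using assms(4) by (simp only: of_nat_le_iff)
  then have "2 * (real k0 + 1) \<le> real k + 3"
    by simp
  then have "1 - t / 2 \<le> (real k + 2) / (real k + 3)"
    by (simp add: t_def field_simps)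
  then have "(1 - t / 2)\<^sup>2 \<le> ((real k + 2) / (real k + 3))\<^sup>2"
    using t by (intro power_mono) auto
  moreover have "l \<le> (1 - t)\<^sup>2"
    using l(2) by (simp add: t_def field_simps)
  moreover have "(1 - t)\<^sup>2 + t / 2 \<le> (1 - t / 2)\<^sup>2"
  proof -
    have "0 \<le> t * (1 / 2 - 3 / 4 * t)"
      using t by simp
    also have "\<dots> = (1 - t / 2)\<^sup>2 - ((1 - t)\<^sup>2 + t / 2)"
      by (simp add: power2_eq_square algebra_simps)
    finally show ?thesis by simp
  qed
  ultimately have gap: "t / 2 \<le> ((real k + 2) / (real k + 3))\<^sup>2 - l"
    by linarith
  have "real k0 \<le> real k0 ^ 3"
    using \<open>1 \<le> k0\<close> power_increasing[of 1 3 "real k0"] by simp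
  then have "real k0 + 1 \<le> 3 * real k0 ^ 3"
    using \<open>1 \<le> k0\<close> by linarith
  then have "1 \<le> 6 * real k0 ^ 3 * (t / 2)"
    by (simp add: t_def field_simps)
  also have "\<dots> \<le> 6 * real k0 ^ 3 * (((real k + 2) / (real k + 3))\<^sup>2 - l)"
    using gap by (intro mult_left_mono) auto
  finally show ?thesis by (simp add: algebra_simps)
qed

lemma discounted_inv_sq_le_early:
  assumes l: "0 \<le> l" "l \<le> (real k0 / (real k0 + 1))\<^sup>2" and "1 \<le> k0" and "k + 1 \<le> 2 * k0"
  shows "discounted_sum l (\<lambda>j. 1 / (real j + 1)\<^sup>2) k \<le> 6 * real k0 ^ 3 / (real k + 2)\<^sup>2"
proof -
  have term_le: "l ^ (k - j) * (1 / (real j + 1)\<^sup>2) \<le> 1 * (1 / 4)" if "j \<in> {1..k}" for j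
  proof (intro mult_mono)
    show "l ^ (k - j) \<le> 1"
      using l(1) le_one_of_le_ratio_sq[OF l(2)] by (simp add: power_le_one)
    have "2\<^sup>2 \<le> (real j + 1)\<^sup>2"
      using that by (intro power_mono) auto
    then show "1 / (real j + 1)\<^sup>2 \<le> 1 / 4"
      by (simp add: field_simps)
  qed (use l in auto)
  have "discounted_sum l (\<lambda>j. 1 / (real j + 1)\<^sup>2) k \<le> (\<Sum>j=1..k. 1 * (1 / 4))"
    unfolding discounted_sum_def by (rule sum_mono) (rule term_le)
  also have "\<dots> = real k / 4"
    by simp
  also have "\<dots> \<le> 6 * real k0 ^ 3 / (real k + 2)\<^sup>2"
  proof -
    have k: "real k \<le> 2 * real k0" "real k + 2 \<le> 3 * real k0"
      using assms(3,4) by linarith+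
    have "(real k + 2)\<^sup>2 \<le> (3 * real k0)\<^sup>2"
      using k(2) by (rule power_mono) simp
    then have "real k * (real k + 2)\<^sup>2 \<le> (2 * real k0) * (3 * real k0)\<^sup>2"
      using k(1) by (intro mult_mono) auto
    also have "\<dots> = 18 * real k0 ^ 3"
      by (simp add: power2_eq_square power3_eq_cube)
    also have "\<dots> \<le> 24 * real k0 ^ 3"
      by simp
    finally show ?thesis
      by (simp add: field_simps)
  qed
  finally show ?thesis .
qed

lemma discounted_inv_sq_le:
  assumes l: "0 \<le> l" "l \<le> (real k0 / (real k0 + 1))\<^sup>2" and "1 \<le> k0" and "1 \<le> k"
  shows "discounted_sum l (\<lambda>j. 1 / (real j + 1)\<^sup>2) k \<le> 6 * real k0 ^ 3 / (real k + 2)\<^sup>2"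
  using \<open>1 \<le> k\<close>
proof (induction k rule: nat_induct_at_least)
  case base
  have "1 \<le> real k0 ^ 3" using \<open>1 \<le> k0\<close> by simp
  then show ?case by (simp add: discounted_sum_def)
next
  case (Suc k)
  define A where "A = 6 * real k0 ^ 3"
  show ?case
  proof (cases "2 * k0 \<le> k + 1")
    case True
    have "discounted_sum l (\<lambda>j. 1 / (real j + 1)\<^sup>2) (Suc k) \<le> l * (A / (real k + 2)\<^sup>2) + 1 / (real k + 2)\<^sup>2"
      using mult_left_mono[OF Suc.IH l(1)] by (simp add: discounted_sum_Suc A_def add.commute)
    also have "\<dots> = (l * A + 1) / (real k + 2)\<^sup>2"
      by (simp add: add_divide_distrib)
    also have "\<dots> \<le> A * ((real k + 2) / (real k + 3))\<^sup>2 / (real k + 2)\<^sup>2"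
      using inv_sq_contraction_step[OF l \<open>1 \<le> k0\<close> True] by (intro divide_right_mono) (auto simp: A_def)
    also have "\<dots> = A / (real (Suc k) + 2)\<^sup>2"
      by (simp add: power_divide)
    finally show ?thesis by (simp add: A_def)
  next
    case False
    then show ?thesis
      using discounted_inv_sq_le_early[OF l \<open>1 \<le> k0\<close>, of "Suc k"] by simp
  qed
qed

section \<open>Network norms and averages\<close>

definition net_norm :: "nat \<Rightarrow> (nat \<Rightarrow> 'e::real_normed_vector) \<Rightarrow> real" where
  "net_norm n v = L2_set (\<lambda>i. norm (v i)) {..<n}"

lemma net_norm_nonneg: "0 \<le> net_norm n v"
  by (simp add: net_norm_def)

lemma norm_le_net_norm: "i < n \<Longrightarrow> norm (v i) \<le> net_norm n v"
  unfolding net_norm_def by (rule member_le_L2_set) auto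

lemma net_norm_sq: "(net_norm n v)\<^sup>2 = (\<Sum>i<n. (norm (v i))\<^sup>2)"
  by (simp add: net_norm_def L2_set_def sum_nonneg)

lemma net_norm_add_le: "net_norm n (\<lambda>i. v i + w i) \<le> net_norm n v + net_norm n w"
proof -
  have "net_norm n (\<lambda>i. v i + w i) \<le> L2_set (\<lambda>i. norm (v i) + norm (w i)) {..<n}"
    unfolding net_norm_def by (intro L2_set_mono norm_triangle_ineq) auto
  also have "\<dots> \<le> net_norm n v + net_norm n w"
    unfolding net_norm_def by (rule L2_set_triangle_ineq)
  finally show ?thesis .
qed

lemma net_norm_scaleR: "net_norm n (\<lambda>i. r *\<^sub>R v i) = \<bar>r\<bar> * net_norm n v"
  by (simp add: net_norm_def L2_set_right_distrib)

lemma net_norm_le_const: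
  assumes "\<And>i. i < n \<Longrightarrow> norm (v i) \<le> b"
  shows "net_norm n v \<le> sqrt (real n) * b"
proof (cases "n = 0")
  case False
  then have "0 \<le> b"
    using assms[of 0] norm_ge_zero order_trans by blast
  have "net_norm n v \<le> L2_set (\<lambda>_. b) {..<n}"
    unfolding net_norm_def using assms by (intro L2_set_mono) auto
  also have "\<dots> = sqrt (real n) * b"
    using \<open>0 \<le> b\<close> by (simp add: L2_set_constant)
  finally show ?thesis .
qed (simp add: net_norm_def)

text \<open>The average minimises the sum of squared distances.\<close>
lemma net_norm_diff_avg_le:
  fixes v :: "nat \<Rightarrow> 'e::real_inner"
  shows "net_norm n (\<lambda>i. v i - avg n v) \<le> net_norm n v"
proof (cases "n = 0")
  case True
  then show ?thesis by (simp add: net_norm_def)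
next
  case False
  define m where "m = avg n v"
  have "(\<Sum>i<n. v i) = real n *\<^sub>R m"
    using False by (simp add: m_def avg_def)
  then have "(\<Sum>i<n. (norm (v i - m))\<^sup>2) = (\<Sum>i<n. (norm (v i))\<^sup>2) - real n * (norm m)\<^sup>2"
    by (simp add: power2_norm_eq_inner inner_diff_left inner_diff_right inner_commute
        sum.distrib sum_subtractf flip: sum_distrib_left inner_sum_left inner_sum_right)
  then have "(\<Sum>i<n. (norm (v i - m))\<^sup>2) \<le> (\<Sum>i<n. (norm (v i))\<^sup>2)"
    by simp
  then show ?thesis
    unfolding net_norm_def L2_set_def m_def by (rule real_sqrt_le_mono)
qed

lemma avg_add: "avg n (\<lambda>i. v i + w i) = avg n v + avg n w"
  by (simp add: avg_def sum.distrib scaleR_add_right)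

lemma avg_diff: "avg n (\<lambda>i. v i - w i) = avg n v - avg n w"
  by (simp add: avg_def sum_subtractf scaleR_diff_right)

lemma avg_scaleR: "avg n (\<lambda>i. r *\<^sub>R v i) = r *\<^sub>R avg n v"
  by (simp add: avg_def scaleR_sum_right[symmetric])

lemma avg_mix:
  assumes "\<forall>j<n. (\<Sum>i<n. c i j) = 1"
  shows "avg n (mix n c v) = avg n v"
proof -
  have "(\<Sum>i<n. mix n c v i) = (\<Sum>j<n. (\<Sum>i<n. c i j) *\<^sub>R v j)"
    unfolding mix_def by (subst sum.swap) (simp add: scaleR_sum_left)
  then show ?thesis
    using assms by (simp add: avg_def)
qed

lemma norm_avg_le:
  assumes "0 < n" and "\<And>i. i < n \<Longrightarrow> norm (v i) \<le> b"
  shows "norm (avg n v) \<le> b"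
proof -
  have "norm (avg n v) \<le> (1 / real n) * (\<Sum>i<n. norm (v i))"
    unfolding avg_def by (simp add: norm_sum divide_right_mono)
  also have "\<dots> \<le> (1 / real n) * (\<Sum>i<n. b)"
    using assms(2) by (intro mult_left_mono sum_mono) auto
  finally show ?thesis
    using assms(1) by simp
qed

lemma mix_mem_convex:
  assumes "convex X" "\<forall>i<n. (\<Sum>j<n. c i j) = 1" "\<forall>i<n. \<forall>j<n. 0 \<le> c i j"
    and "\<And>j. j < n \<Longrightarrow> v j \<in> X" and "i < n"
  shows "mix n c v i \<in> X"
  unfolding mix_def using assms by (intro convex_sum) auto

lemma avg_mem_convex:
  assumes "convex X" "0 < n" "\<And>j. j < n \<Longrightarrow> v j \<in> X"
  shows "avg n v \<in> X"
proof -
  have "avg n v = (\<Sum>j<n. (1 / real n) *\<^sub>R v j)"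
    by (simp add: avg_def scaleR_sum_right)
  also have "\<dots> \<in> X"
    using assms by (intro convex_sum) auto
  finally show ?thesis .
qed

lemma dmfw_x_Suc:
  "1 \<le> k \<Longrightarrow> dmfw_x n c g lmo x1 gam eta smp (Suc k) =
    (\<lambda>i. mix n c (dmfw_x n c g lmo x1 gam eta smp k) i + eta k *\<^sub>R
       (lmo (dmfw_p n c g lmo x1 gam eta smp k i) - mix n c (dmfw_x n c g lmo x1 gam eta smp k) i))"
  by (cases k) (auto simp: dmfw_x_def dmfw_p_def dmfw_s_def Let_def split: prod.split)

lemma dmfw_y_Suc:
  "1 \<le> k \<Longrightarrow> dmfw_y n c g lmo x1 gam eta smp (Suc k) =
    (\<lambda>i. (1 - gam (Suc k)) *\<^sub>R dmfw_y n c g lmo x1 gam eta smp k i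
       + g i (mix n c (dmfw_x n c g lmo x1 gam eta smp (Suc k)) i) (smp (Suc k) i)
       - (1 - gam (Suc k)) *\<^sub>R g i (mix n c (dmfw_x n c g lmo x1 gam eta smp k) i) (smp (Suc k) i))"
  by (cases k) (auto simp: dmfw_x_def dmfw_y_def Let_def split: prod.split)

lemma dmfw_s_Suc:
  "1 \<le> k \<Longrightarrow> dmfw_s n c g lmo x1 gam eta smp (Suc k) =
    (\<lambda>i. mix n c (dmfw_s n c g lmo x1 gam eta smp k) i
       + (dmfw_y n c g lmo x1 gam eta smp (Suc k) i - dmfw_y n c g lmo x1 gam eta smp k i))"
  by (cases k) (auto simp: dmfw_y_def dmfw_s_def Let_def split: prod.split)

lemma dmfw_at_1:
  "dmfw_x n c g lmo x1 gam eta smp 1 = x1"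
  "dmfw_y n c g lmo x1 gam eta smp 1 = (\<lambda>i. g i (mix n c x1 i) (smp 1 i))"
  "dmfw_s n c g lmo x1 gam eta smp 1 = dmfw_y n c g lmo x1 gam eta smp 1"
  by (simp_all add: dmfw_x_def dmfw_y_def dmfw_s_def)

section \<open>Momentum averages\<close>

text \<open>The average produced by the momentum recursion of DMFW with gamma_k = 2/(k+1);
  the value at 0 is irrelevant since the weight of the old value vanishes at the first step.\<close>
fun running_avg :: "(nat \<Rightarrow> real) \<Rightarrow> nat \<Rightarrow> real" where
  "running_avg a 0 = 0"
| "running_avg a (Suc j) = (1 - 2 / (real j + 2)) * running_avg a j + 2 / (real j + 2) * a (Suc j)"

lemma momentum_weight_le: "(1 - 2 / (real k + 2)) * (2 / (real k + 1)) \<le> 2 / (real k + 2)"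
proof -
  have "(1 - 2 / (real k + 2)) * (2 / (real k + 1)) = 2 / (real k + 2) * (real k / (real k + 1))"
    by (simp add: field_simps)
  also have "\<dots> \<le> 2 / (real k + 2) * 1"
    by (intro mult_left_mono) auto
  finally show ?thesis by simp
qed

lemma running_avg_nonneg: "(\<And>j. 0 \<le> a j) \<Longrightarrow> 0 \<le> running_avg a j"
  by (induction j) auto

lemma sq_convex_comb_le:
  fixes a b t :: real
  assumes "0 \<le> t" "t \<le> 1"
  shows "((1 - t) * a + t * b)\<^sup>2 \<le> (1 - t) * a\<^sup>2 + t * b\<^sup>2"
proof -
  have "(1 - t) * a\<^sup>2 + t * b\<^sup>2 - ((1 - t) * a + t * b)\<^sup>2 = t * (1 - t) * (a - b)\<^sup>2"
    by (simp add: power2_eq_square algebra_simps)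
  moreover have "0 \<le> t * (1 - t) * (a - b)\<^sup>2"
    using assms by simp
  ultimately show ?thesis by linarith
qed

lemma sq_le_running_avg:
  fixes u b :: "nat \<Rightarrow> real"
  assumes "\<And>j. 0 \<le> u j" and "u 1 \<le> b 1"
    and step: "\<And>j. 1 \<le> j \<Longrightarrow> u (Suc j) \<le> (1 - 2 / (real j + 2)) * u j + 2 / (real j + 2) * b (Suc j)"
    and "1 \<le> k"
  shows "(u k)\<^sup>2 \<le> running_avg (\<lambda>j. (b j)\<^sup>2) k"
  using \<open>1 \<le> k\<close>
proof (induction k rule: nat_induct_at_least)
  case base
  then show ?case using assms(1,2) by (simp add: power_mono)
next
  case (Suc k)
  define t where "t = 2 / (real k + 2)"
  have t: "0 \<le> t" "t \<le> 1"
    by (auto simp: t_def)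
  have "(u (Suc k))\<^sup>2 \<le> ((1 - t) * u k + t * b (Suc k))\<^sup>2"
    using step[OF Suc.hyps] assms(1)[of "Suc k"] unfolding t_def by (intro power_mono) auto
  also have "\<dots> \<le> (1 - t) * (u k)\<^sup>2 + t * (b (Suc k))\<^sup>2"
    using t by (rule sq_convex_comb_le)
  also have "\<dots> \<le> (1 - t) * running_avg (\<lambda>j. (b j)\<^sup>2) k + t * (b (Suc k))\<^sup>2"
    using Suc.IH t by (intro add_right_mono mult_left_mono) auto
  finally show ?case by (simp add: t_def)
qed

text \<open>A single sample path smp of DMFW with gamma_k = 2/(k+1) and eta_k = 2/(k+2);
  l plays the role of |lambda|.\<close>
locale dmfw_path =
  fixes n :: nat and c :: "nat \<Rightarrow> nat \<Rightarrow> real" and g :: "nat \<Rightarrow> 'e::euclidean_space \<Rightarrow> 'b \<Rightarrow> 'e"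
    and lmo :: "'e \<Rightarrow> 'e" and x1 :: "nat \<Rightarrow> 'e" and smp :: "nat \<Rightarrow> nat \<Rightarrow> 'b"
    and X :: "'e set" and SS :: "'b set" and D L l :: real and k0 :: nat
  assumes n_pos: "0 < n"
    and c_nonneg: "\<forall>i<n. \<forall>j<n. 0 \<le> c i j"
    and c_row: "\<forall>i<n. (\<Sum>j<n. c i j) = 1"
    and c_col: "\<forall>j<n. (\<Sum>i<n. c i j) = 1"
    and mix_contract: "\<And>v::nat \<Rightarrow> 'e.
      net_norm n (\<lambda>i. mix n c v i - avg n v) \<le> l * net_norm n (\<lambda>i. v i - avg n v)"
    and l_nonneg: "0 \<le> l" and l_le: "l \<le> (real k0 / (real k0 + 1))\<^sup>2"
    and X_convex: "convex X" and X_diam: "\<forall>x\<in>X. \<forall>x'\<in>X. norm (x - x') \<le> D"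
    and lmo_in: "\<forall>q. lmo q \<in> X" and x1_in: "\<forall>i<n. x1 i \<in> X"
    and g_lip: "\<forall>i<n. \<forall>s\<in>SS. \<forall>x x'. norm (g i x s - g i x' s) \<le> L * norm (x - x')"
    and smp_in: "\<And>k i. 1 \<le> k \<Longrightarrow> i < n \<Longrightarrow> smp k i \<in> SS"
begin

definition "xs k = dmfw_x n c g lmo x1 (\<lambda>k. 2 / (real k + 1)) (\<lambda>k. 2 / (real k + 2)) smp k"
definition "ys k = dmfw_y n c g lmo x1 (\<lambda>k. 2 / (real k + 1)) (\<lambda>k. 2 / (real k + 2)) smp k"
definition "ss k = dmfw_s n c g lmo x1 (\<lambda>k. 2 / (real k + 1)) (\<lambda>k. 2 / (real k + 2)) smp k"
definition "xh k = mix n c (xs k)"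

lemma xs_Suc:
  "1 \<le> k \<Longrightarrow> xs (Suc k) = (\<lambda>i. xh k i + (2 / (real k + 2)) *\<^sub>R (lmo (mix n c (ss k) i) - xh k i))"
  unfolding xs_def xh_def ss_def by (simp add: dmfw_x_Suc dmfw_p_def)

lemma ys_Suc:
  "1 \<le> k \<Longrightarrow> ys (Suc k) = (\<lambda>i. (1 - 2 / (real k + 2)) *\<^sub>R ys k i
     + g i (xh (Suc k) i) (smp (Suc k) i) - (1 - 2 / (real k + 2)) *\<^sub>R g i (xh k i) (smp (Suc k) i))"
  unfolding ys_def xh_def xs_def by (simp add: dmfw_y_Suc add.commute)

lemma ss_Suc:
  "1 \<le> k \<Longrightarrow> ss (Suc k) = (\<lambda>i. mix n c (ss k) i + (ys (Suc k) i - ys k i))"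
  unfolding ss_def ys_def by (simp add: dmfw_s_Suc)

lemma xs_1: "xs 1 = x1"
  and ys_1: "ys 1 = (\<lambda>i. g i (mix n c x1 i) (smp 1 i))"
  and ss_1: "ss 1 = ys 1"
  unfolding xs_def ys_def ss_def by (simp_all only: dmfw_at_1)

lemma D_nonneg: "0 \<le> D"
  using X_diam lmo_in by (metis norm_ge_zero order_trans)

lemma g_lip_sample:
  "i < n \<Longrightarrow> 1 \<le> j \<Longrightarrow> norm (g i x (smp j i) - g i x' (smp j i)) \<le> L * norm (x - x')"
  using g_lip smp_in by simp

lemma L_nonneg: "0 \<le> L"
proof -
  obtain b :: 'e where b: "b \<in> Basis"
    using nonempty_Basis by blast
  have "norm (g 0 0 (smp 1 0) - g 0 b (smp 1 0)) \<le> L * norm (0 - b)"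
    using n_pos by (intro g_lip_sample) auto
  then show ?thesis
    using b by (simp add: order_trans[OF norm_ge_zero])
qed

lemma l_le_one: "l \<le> 1"
  using le_one_of_le_ratio_sq[OF l_le] .

lemma xs_in: "1 \<le> k \<Longrightarrow> i < n \<Longrightarrow> xs k i \<in> X"
proof (induction k arbitrary: i rule: nat_induct_at_least)
  case base
  then show ?case unfolding xs_1 using x1_in by simp
next
  case (Suc k)
  define t where "t = 2 / (real k + 2)"
  have "xh k i \<in> X"
    unfolding xh_def using Suc by (intro mix_mem_convex[OF X_convex c_row c_nonneg]) auto
  then have "(1 - t) *\<^sub>R xh k i + t *\<^sub>R lmo (mix n c (ss k) i) \<in> X"
    using lmo_in X_convex by (intro convexD) (auto simp: t_def)
  then show ?case
    using xs_Suc[OF Suc.hyps] by (simp add: t_def algebra_simps)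
qed

lemma xh_in: "1 \<le> k \<Longrightarrow> i < n \<Longrightarrow> xh k i \<in> X"
  unfolding xh_def by (intro mix_mem_convex[OF X_convex c_row c_nonneg]) (auto intro: xs_in)

definition "B = 2 * (real k0 + 1) * sqrt (real n) * D"

lemma x_disagreement_Suc_le:
  assumes "1 \<le> k"
  shows "net_norm n (\<lambda>i. xs (Suc k) i - avg n (xs (Suc k)))
    \<le> l * net_norm n (\<lambda>i. xs k i - avg n (xs k)) + 2 / (real k + 2) * (sqrt (real n) * D)"
proof -
  define t where "t = 2 / (real k + 2)"
  define w where "w i = lmo (mix n c (ss k) i) - xh k i" for i
  have xs': "xs (Suc k) = (\<lambda>i. xh k i + t *\<^sub>R w i)"
    using xs_Suc[OF assms] by (simp add: t_def w_def)
  have "avg n (xs (Suc k)) = avg n (xs k) + t *\<^sub>R avg n w"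
    unfolding xs' avg_add avg_scaleR xh_def avg_mix[OF c_col] ..
  then have "(\<lambda>i. xs (Suc k) i - avg n (xs (Suc k)))
      = (\<lambda>i. (xh k i - avg n (xs k)) + t *\<^sub>R (w i - avg n w))"
    by (simp add: xs' algebra_simps)
  then have "net_norm n (\<lambda>i. xs (Suc k) i - avg n (xs (Suc k)))
      \<le> net_norm n (\<lambda>i. xh k i - avg n (xs k)) + net_norm n (\<lambda>i. t *\<^sub>R (w i - avg n w))"
    by (simp add: net_norm_add_le)
  moreover have "net_norm n (\<lambda>i. xh k i - avg n (xs k)) \<le> l * net_norm n (\<lambda>i. xs k i - avg n (xs k))"
    unfolding xh_def by (rule mix_contract)
  moreover have "net_norm n (\<lambda>i. t *\<^sub>R (w i - avg n w)) \<le> t * (sqrt (real n) * D)"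
  proof -
    have "norm (w i) \<le> D" if "i < n" for i
      unfolding w_def using lmo_in xh_in[OF assms that] X_diam by blast
    then have "net_norm n (\<lambda>i. w i - avg n w) \<le> sqrt (real n) * D"
      using net_norm_diff_avg_le[of n w] net_norm_le_const[of n w D] by fastforce
    then have "t * net_norm n (\<lambda>i. w i - avg n w) \<le> t * (sqrt (real n) * D)"
      by (rule mult_left_mono) (simp add: t_def)
    then show ?thesis
      by (simp add: net_norm_scaleR t_def)
  qed
  ultimately show ?thesis
    by (simp add: t_def)
qed

lemma x_disagreement_le:
  assumes "1 \<le> k"
  shows "net_norm n (\<lambda>i. xs k i - avg n (xs k)) \<le> B / (real k + 1)"
proof -
  have bounded: "net_norm n (\<lambda>i. xs j i - avg n (xs j)) \<le> sqrt (real n) * D" if "1 \<le> j" for j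
  proof (rule net_norm_le_const)
    fix i
    assume "i < n"
    moreover have "avg n (xs j) \<in> X"
      using xs_in[OF that] by (intro avg_mem_convex[OF X_convex n_pos])
    ultimately show "norm (xs j i - avg n (xs j)) \<le> D"
      using X_diam xs_in[OF that] by blast
  qed
  have "net_norm n (\<lambda>i. xs k i - avg n (xs k)) \<le> 2 * (real k0 + 1) * (sqrt (real n) * D) / (real k + 1)"
    by (rule perturbed_contraction_le[OF l_nonneg l_le _ bounded x_disagreement_Suc_le assms])
      (use D_nonneg in simp)
  then show ?thesis
    by (simp add: B_def mult.assoc)
qed

lemma xh_dist_avg_le:
  assumes "1 \<le> k" "i < n"
  shows "norm (xh k i - avg n (xs k)) \<le> B / (real k + 1)"
proof -
  have "norm (xh k i - avg n (xs k)) \<le> l * net_norm n (\<lambda>i. xs k i - avg n (xs k))"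
    unfolding xh_def using norm_le_net_norm[OF assms(2)] mix_contract order_trans by blast
  also have "\<dots> \<le> net_norm n (\<lambda>i. xs k i - avg n (xs k))"
    using l_nonneg l_le_one net_norm_nonneg by (intro mult_left_le_one_le)
  finally show ?thesis
    using x_disagreement_le[OF assms(1)] by linarith
qed

lemma xh_step_le:
  assumes "1 \<le> k" "i < n"
  shows "norm (xh (Suc k) i - xh k i) \<le> 2 * (D + B) / (real k + 1)"
proof -
  define t where "t = 2 / (real k + 2)"
  define w where "w = (\<lambda>i. lmo (mix n c (ss k) i) - xh k i)"
  have "avg n (xs (Suc k)) - avg n (xs k) = t *\<^sub>R avg n w"
    using xs_Suc[OF assms(1)] by (simp add: avg_add avg_scaleR xh_def avg_mix[OF c_col] t_def w_def)
  then have "norm (avg n (xs (Suc k)) - avg n (xs k)) = t * norm (avg n w)"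
    by (simp add: t_def)
  also have "\<dots> \<le> t * D"
    unfolding w_def using n_pos lmo_in xh_in[OF assms(1)] X_diam
    by (intro mult_left_mono norm_avg_le) (auto simp: t_def)
  also have "\<dots> \<le> 2 / (real k + 1) * D"
    using D_nonneg by (intro mult_right_mono) (auto simp: t_def frac_le)
  finally have avg_step: "norm (avg n (xs (Suc k)) - avg n (xs k)) \<le> 2 * D / (real k + 1)"
    by simp
  have "B / (real (Suc k) + 1) \<le> B / (real k + 1)"
    using D_nonneg by (intro divide_left_mono) (auto simp: B_def)
  then have new: "norm (xh (Suc k) i - avg n (xs (Suc k))) \<le> B / (real k + 1)"
    using xh_dist_avg_le[of "Suc k" i] assms by simp
  have old: "norm (xh k i - avg n (xs k)) \<le> B / (real k + 1)"
    using xh_dist_avg_le assms by blast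
  have tri: "norm (a + b - e) \<le> norm a + norm b + norm e" for a b e :: 'e
    using norm_triangle_ineq4[of "a + b" e] norm_triangle_ineq[of a b] by linarith
  have "xh (Suc k) i - xh k i
      = (xh (Suc k) i - avg n (xs (Suc k))) + (avg n (xs (Suc k)) - avg n (xs k)) - (xh k i - avg n (xs k))"
    by simp
  then have "norm (xh (Suc k) i - xh k i) \<le> norm (xh (Suc k) i - avg n (xs (Suc k)))
      + norm (avg n (xs (Suc k)) - avg n (xs k)) + norm (xh k i - avg n (xs k))"
    by (simp only: tri)
  also have "\<dots> \<le> B / (real k + 1) + 2 * D / (real k + 1) + B / (real k + 1)"
    using new avg_step old by linarith
  also have "\<dots> = 2 * (D + B) / (real k + 1)"
    by (simp add: divide_simps)
  finally show ?thesis .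
qed

definition "K = L * (2 * D + B)"
definition "grad_bound j i = norm (g i (x1 i) (smp j i)) + K"

lemma K_ge: "L * D \<le> K"
proof -
  have "D \<le> 2 * D + B"
    using D_nonneg by (simp add: B_def)
  then show ?thesis
    unfolding K_def using L_nonneg by (rule mult_left_mono)
qed

lemma K_nonneg: "0 \<le> K"
  using K_ge L_nonneg D_nonneg by (meson mult_nonneg_nonneg order_trans)

lemma K_le: "1 \<le> k0 \<Longrightarrow> K \<le> 2 * L * (D + 2 * (real k0 * sqrt (real n) * D))"
proof -
  assume "1 \<le> k0"
  then have "2 * (real k0 + 1) * (sqrt (real n) * D) \<le> 4 * real k0 * (sqrt (real n) * D)"
    using D_nonneg by (intro mult_right_mono) auto
  then have "B \<le> 4 * (real k0 * sqrt (real n) * D)"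
    by (simp add: B_def mult.assoc)
  then have "L * (2 * D + B) \<le> L * (2 * D + 4 * (real k0 * sqrt (real n) * D))"
    using L_nonneg by (intro mult_left_mono) auto
  then show ?thesis
    by (simp add: K_def algebra_simps)
qed

lemma sample_grad_le:
  assumes "1 \<le> j" "i < n" "x \<in> X"
  shows "norm (g i x (smp j i)) \<le> norm (g i (x1 i) (smp j i)) + L * D"
proof -
  have "norm (g i x (smp j i) - g i (x1 i) (smp j i)) \<le> L * norm (x - x1 i)"
    using assms by (intro g_lip_sample)
  also have "\<dots> \<le> L * D"
    using X_diam assms x1_in L_nonneg by (intro mult_left_mono) auto
  finally show ?thesis
    using norm_triangle_sub[of "g i x (smp j i)" "g i (x1 i) (smp j i)"] by linarith
qed

text \<open>The momentum correction is damped by 1 - gamma_{k+1} = k/(k+2), which turns the O(1/k)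
  drift of the points into a term of the same order as the step size gamma_{k+1}.\<close>
lemma grad_drift_le:
  assumes "1 \<le> k" "i < n"
  shows "(1 - 2 / (real k + 2)) * norm (g i (xh (Suc k) i) (smp (Suc k) i) - g i (xh k i) (smp (Suc k) i))
    \<le> 2 / (real k + 2) * (L * (D + B))"
proof -
  define t where "t = 2 / (real k + 2)"
  have t: "0 \<le> 1 - t"
    by (simp add: t_def)
  have "norm (g i (xh (Suc k) i) (smp (Suc k) i) - g i (xh k i) (smp (Suc k) i))
      \<le> L * norm (xh (Suc k) i - xh k i)"
    using assms(2) by (rule g_lip_sample) simp
  also have "\<dots> \<le> L * (2 * (D + B) / (real k + 1))"
    using xh_step_le[OF assms] L_nonneg by (rule mult_left_mono)
  finally have "(1 - t) * norm (g i (xh (Suc k) i) (smp (Suc k) i) - g i (xh k i) (smp (Suc k) i))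
      \<le> (1 - t) * (L * (2 * (D + B) / (real k + 1)))"
    using t by (rule mult_left_mono)
  also have "\<dots> = ((1 - t) * (2 / (real k + 1))) * (L * (D + B))"
    by (simp add: field_simps)
  also have "\<dots> \<le> t * (L * (D + B))"
    using momentum_weight_le[of k] L_nonneg D_nonneg by (intro mult_right_mono) (auto simp: t_def B_def)
  finally show ?thesis
    by (simp add: t_def)
qed

lemma ys_Suc_eq:
  assumes "1 \<le> k"
  defines "t \<equiv> 2 / (real k + 2)"
  shows "ys (Suc k) i = ys k i + t *\<^sub>R (g i (xh (Suc k) i) (smp (Suc k) i) - ys k i)
    + (1 - t) *\<^sub>R (g i (xh (Suc k) i) (smp (Suc k) i) - g i (xh k i) (smp (Suc k) i))"
  using ys_Suc[OF assms(1)] by (simp add: t_def algebra_simps)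

lemma norm_ys_Suc_le:
  assumes "1 \<le> k" "i < n"
  shows "norm (ys (Suc k) i) \<le> (1 - 2 / (real k + 2)) * norm (ys k i) + 2 / (real k + 2) * grad_bound (Suc k) i"
proof -
  define t where "t = 2 / (real k + 2)"
  define y G1 G0 where "y = ys k i" and "G1 = g i (xh (Suc k) i) (smp (Suc k) i)"
    and "G0 = g i (xh k i) (smp (Suc k) i)"
  have t: "0 \<le> t" "t \<le> 1"
    by (auto simp: t_def)
  have "ys (Suc k) i = (1 - t) *\<^sub>R y + t *\<^sub>R G1 + (1 - t) *\<^sub>R (G1 - G0)"
    using ys_Suc_eq[OF assms(1)] by (simp add: t_def y_def G1_def G0_def algebra_simps)
  then have "norm (ys (Suc k) i) \<le> norm ((1 - t) *\<^sub>R y + t *\<^sub>R G1) + norm ((1 - t) *\<^sub>R (G1 - G0))"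
    by (simp only: norm_triangle_ineq)
  also have "\<dots> \<le> norm ((1 - t) *\<^sub>R y) + norm (t *\<^sub>R G1) + norm ((1 - t) *\<^sub>R (G1 - G0))"
    using norm_triangle_ineq[of "(1 - t) *\<^sub>R y" "t *\<^sub>R G1"] by linarith
  also have "\<dots> = (1 - t) * norm y + t * norm G1 + (1 - t) * norm (G1 - G0)"
    using t by simp
  finally have "norm (ys (Suc k) i) \<le> (1 - t) * norm y + t * norm G1 + (1 - t) * norm (G1 - G0)" .
  moreover have "t * norm G1 \<le> t * (norm (g i (x1 i) (smp (Suc k) i)) + L * D)"
    unfolding G1_def using sample_grad_le xh_in assms t by (intro mult_left_mono) auto
  moreover have "(1 - t) * norm (G1 - G0) \<le> t * (L * (D + B))"
    unfolding t_def G1_def G0_def by (rule grad_drift_le[OF assms])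
  moreover have "t * (norm (g i (x1 i) (smp (Suc k) i)) + L * D) + t * (L * (D + B)) = t * grad_bound (Suc k) i"
    by (simp add: grad_bound_def K_def algebra_simps)
  ultimately show ?thesis
    unfolding t_def[symmetric] y_def[symmetric] by linarith
qed

lemma norm_ys_diff_le:
  assumes "1 \<le> k" "i < n"
  shows "norm (ys (Suc k) i - ys k i) \<le> 2 / (real k + 2) * (grad_bound (Suc k) i + norm (ys k i))"
proof -
  define t where "t = 2 / (real k + 2)"
  define y G1 G0 where "y = ys k i" and "G1 = g i (xh (Suc k) i) (smp (Suc k) i)"
    and "G0 = g i (xh k i) (smp (Suc k) i)"
  have t: "0 \<le> t" "t \<le> 1"
    by (auto simp: t_def)
  have "ys (Suc k) i - ys k i = t *\<^sub>R (G1 - y) + (1 - t) *\<^sub>R (G1 - G0)"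
    using ys_Suc_eq[OF assms(1)] by (simp add: t_def y_def G1_def G0_def)
  then have "norm (ys (Suc k) i - ys k i) \<le> norm (t *\<^sub>R (G1 - y)) + norm ((1 - t) *\<^sub>R (G1 - G0))"
    by (simp only: norm_triangle_ineq)
  also have "\<dots> = t * norm (G1 - y) + (1 - t) * norm (G1 - G0)"
    using t by simp
  also have "\<dots> \<le> t * (norm G1 + norm y) + (1 - t) * norm (G1 - G0)"
    using t norm_triangle_ineq4[of G1 y] by (simp add: mult_left_mono)
  finally have "norm (ys (Suc k) i - ys k i) \<le> t * norm G1 + t * norm y + (1 - t) * norm (G1 - G0)"
    by (simp add: distrib_left)
  moreover have "t * norm G1 \<le> t * (norm (g i (x1 i) (smp (Suc k) i)) + L * D)"
    unfolding G1_def using sample_grad_le xh_in assms t by (intro mult_left_mono) auto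
  moreover have "(1 - t) * norm (G1 - G0) \<le> t * (L * (D + B))"
    unfolding t_def G1_def G0_def by (rule grad_drift_le[OF assms])
  moreover have "t * (norm (g i (x1 i) (smp (Suc k) i)) + L * D) + t * (L * (D + B)) = t * grad_bound (Suc k) i"
    by (simp add: grad_bound_def K_def algebra_simps)
  ultimately show ?thesis
    unfolding t_def[symmetric] y_def[symmetric] distrib_left by linarith
qed

lemma norm_ys_sq_le:
  assumes "1 \<le> k" "i < n"
  shows "(norm (ys k i))\<^sup>2 \<le> running_avg (\<lambda>j. (grad_bound j i)\<^sup>2) k"
proof (rule sq_le_running_avg[OF norm_ge_zero _ _ assms(1)])
  have "mix n c x1 i \<in> X"
    using assms(2) x1_in by (intro mix_mem_convex[OF X_convex c_row c_nonneg]) auto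
  then show "norm (ys 1 i) \<le> grad_bound 1 i"
    unfolding ys_1 using sample_grad_le[of 1 i] assms(2) K_ge by (fastforce simp: grad_bound_def)
qed (use norm_ys_Suc_le assms(2) in auto)

text \<open>Since s_1 = y_1, the vector y_1 acts as the first increment of the tracking variable.\<close>
definition "y_incr j = (if j = 1 then ys 1 else (\<lambda>i. ys j i - ys (j - 1) i))"

lemma y_incr_sq_le:
  assumes "1 \<le> j" "i < n"
  shows "(real j + 1)\<^sup>2 * (norm (y_incr j i))\<^sup>2 \<le> 8 * ((grad_bound j i)\<^sup>2 + running_avg (\<lambda>j. (grad_bound j i)\<^sup>2) (j - 1))"
proof (cases "j = 1")
  case True
  have "(norm (ys 1 i))\<^sup>2 \<le> (grad_bound 1 i)\<^sup>2"
    using norm_ys_sq_le[of 1 i] assms(2) by simp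
  then have "(norm (ys 1 i))\<^sup>2 \<le> 2 * (grad_bound 1 i)\<^sup>2"
    by (rule order_trans) simp
  then show ?thesis
    using True by (simp add: y_incr_def)
next
  case False
  then obtain k where j: "j = Suc k" and k: "1 \<le> k"
    using assms(1) by (cases j) auto
  have "(real k + 2) * norm (ys (Suc k) i - ys k i) \<le> 2 * (grad_bound (Suc k) i + norm (ys k i))"
    using norm_ys_diff_le[OF k assms(2)] by (simp add: field_simps)
  then have "((real k + 2) * norm (ys (Suc k) i - ys k i))\<^sup>2 \<le> (2 * (grad_bound (Suc k) i + norm (ys k i)))\<^sup>2"
    by (intro power_mono) auto
  also have "\<dots> \<le> 8 * ((grad_bound (Suc k) i)\<^sup>2 + (norm (ys k i))\<^sup>2)"
    using sum_squares_bound[of "grad_bound (Suc k) i" "norm (ys k i)"] by (simp add: power2_eq_square algebra_simps)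
  also have "\<dots> \<le> 8 * ((grad_bound (Suc k) i)\<^sup>2 + running_avg (\<lambda>j. (grad_bound j i)\<^sup>2) k)"
    using norm_ys_sq_le[OF k assms(2)] by simp
  finally show ?thesis
    using j k by (simp add: y_incr_def power_mult_distrib add.commute)
qed

lemma avg_ss: "1 \<le> k \<Longrightarrow> avg n (ss k) = avg n (ys k)"
proof (induction k rule: nat_induct_at_least)
  case base
  then show ?case by (simp only: ss_1)
next
  case (Suc k)
  then show ?case
    unfolding ss_Suc[OF Suc.hyps] avg_add avg_diff avg_mix[OF c_col] by simp
qed

lemma s_disagreement_le:
  "1 \<le> k \<Longrightarrow> net_norm n (\<lambda>i. ss k i - avg n (ss k)) \<le> discounted_sum l (\<lambda>j. net_norm n (y_incr j)) k"
proof (rule le_discounted_sum[OF l_nonneg])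
  show "net_norm n (\<lambda>i. ss 1 i - avg n (ss 1)) \<le> net_norm n (y_incr 1)"
    using net_norm_diff_avg_le[of n "ss 1"] unfolding ss_1 y_incr_def by simp
next
  fix k :: nat
  assume k: "1 \<le> k"
  define d where "d i = y_incr (Suc k) i" for i
  have "ss (Suc k) = (\<lambda>i. mix n c (ss k) i + d i)"
    using ss_Suc[OF k] k by (simp add: d_def y_incr_def)
  then have "(\<lambda>i. ss (Suc k) i - avg n (ss (Suc k)))
      = (\<lambda>i. (mix n c (ss k) i - avg n (ss k)) + (d i - avg n d))"
    by (simp add: avg_add avg_mix[OF c_col] algebra_simps)
  then have "net_norm n (\<lambda>i. ss (Suc k) i - avg n (ss (Suc k)))
      \<le> net_norm n (\<lambda>i. mix n c (ss k) i - avg n (ss k)) + net_norm n (\<lambda>i. d i - avg n d)"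
    by (simp add: net_norm_add_le)
  also have "\<dots> \<le> l * net_norm n (\<lambda>i. ss k i - avg n (ss k)) + net_norm n (y_incr (Suc k))"
    using mix_contract net_norm_diff_avg_le unfolding d_def by (intro add_mono) (auto simp: fun_eq_iff)
  finally show "net_norm n (\<lambda>i. ss (Suc k) i - avg n (ss (Suc k)))
      \<le> l * net_norm n (\<lambda>i. ss k i - avg n (ss k)) + net_norm n (y_incr (Suc k))" .
qed

lemma disagreement_sq_le:
  assumes "1 \<le> k" "i < n"
  shows "(norm (mix n c (ss k) i - avg n (ys k)))\<^sup>2
    \<le> discounted_sum l (\<lambda>j. 1 / (real j + 1)\<^sup>2) k
      * discounted_sum l (\<lambda>j. 8 * (\<Sum>m<n. (grad_bound j m)\<^sup>2 + running_avg (\<lambda>j. (grad_bound j m)\<^sup>2) (j - 1))) k"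
proof -
  have "norm (mix n c (ss k) i - avg n (ys k)) \<le> l * net_norm n (\<lambda>i. ss k i - avg n (ss k))"
    using norm_le_net_norm[OF assms(2)] mix_contract avg_ss[OF assms(1)] order_trans by metis
  also have "\<dots> \<le> net_norm n (\<lambda>i. ss k i - avg n (ss k))"
    using l_nonneg l_le_one net_norm_nonneg by (intro mult_left_le_one_le)
  also have "\<dots> \<le> discounted_sum l (\<lambda>j. net_norm n (y_incr j)) k"
    using s_disagreement_le[OF assms(1)] .
  finally have "(norm (mix n c (ss k) i - avg n (ys k)))\<^sup>2 \<le> (discounted_sum l (\<lambda>j. net_norm n (y_incr j)) k)\<^sup>2"
    by (intro power_mono) auto
  also have "\<dots> \<le> discounted_sum l (\<lambda>j. 1 / (real j + 1)\<^sup>2) k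
      * discounted_sum l (\<lambda>j. ((real j + 1) * net_norm n (y_incr j))\<^sup>2) k"
    by (rule discounted_sum_sq_le[OF l_nonneg]) simp
  also have "\<dots> \<le> discounted_sum l (\<lambda>j. 1 / (real j + 1)\<^sup>2) k
      * discounted_sum l (\<lambda>j. 8 * (\<Sum>m<n. (grad_bound j m)\<^sup>2 + running_avg (\<lambda>j. (grad_bound j m)\<^sup>2) (j - 1))) k"
  proof (intro mult_left_mono discounted_sum_mono discounted_sum_nonneg l_nonneg)
    fix j :: nat
    assume "1 \<le> j"
    have "((real j + 1) * net_norm n (y_incr j))\<^sup>2 = (\<Sum>m<n. (real j + 1)\<^sup>2 * (norm (y_incr j m))\<^sup>2)"
      by (simp add: power_mult_distrib net_norm_sq sum_distrib_left)
    also have "\<dots> \<le> (\<Sum>m<n. 8 * ((grad_bound j m)\<^sup>2 + running_avg (\<lambda>j. (grad_bound j m)\<^sup>2) (j - 1)))"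
      using y_incr_sq_le \<open>1 \<le> j\<close> by (intro sum_mono) auto
    finally show "((real j + 1) * net_norm n (y_incr j))\<^sup>2
        \<le> 8 * (\<Sum>m<n. (grad_bound j m)\<^sup>2 + running_avg (\<lambda>j. (grad_bound j m)\<^sup>2) (j - 1))"
      by (simp add: sum_distrib_left)
  qed simp
  finally show ?thesis .
qed

end

section \<open>Nonnegative integrals\<close>

lemma nn_integral_cmult_le:
  fixes f :: "'a \<Rightarrow> real"
  assumes "f \<in> borel_measurable M" "\<And>x. 0 \<le> f x" "0 \<le> a" "0 \<le> r"
    and "(\<integral>\<^sup>+ x. ennreal (f x) \<partial>M) \<le> ennreal r"
  shows "(\<integral>\<^sup>+ x. ennreal (a * f x) \<partial>M) \<le> ennreal (a * r)"
proof -
  have "(\<integral>\<^sup>+ x. ennreal (a * f x) \<partial>M) = ennreal a * (\<integral>\<^sup>+ x. ennreal (f x) \<partial>M)"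
    using assms(1-3) by (simp add: ennreal_mult nn_integral_cmult)
  also have "\<dots> \<le> ennreal a * ennreal r"
    using assms(5) by (rule mult_left_mono) simp
  finally show ?thesis
    using assms(3,4) by (simp add: ennreal_mult)
qed

lemma nn_integral_sum_le:
  fixes f :: "'t \<Rightarrow> 'a \<Rightarrow> real"
  assumes "\<And>t. t \<in> A \<Longrightarrow> f t \<in> borel_measurable M" "\<And>t x. t \<in> A \<Longrightarrow> 0 \<le> f t x"
    and "\<And>t. t \<in> A \<Longrightarrow> 0 \<le> r t"
    and "\<And>t. t \<in> A \<Longrightarrow> (\<integral>\<^sup>+ x. ennreal (f t x) \<partial>M) \<le> ennreal (r t)"
  shows "(\<integral>\<^sup>+ x. ennreal (\<Sum>t\<in>A. f t x) \<partial>M) \<le> ennreal (\<Sum>t\<in>A. r t)"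
proof -
  have "(\<integral>\<^sup>+ x. ennreal (\<Sum>t\<in>A. f t x) \<partial>M) = (\<Sum>t\<in>A. \<integral>\<^sup>+ x. ennreal (f t x) \<partial>M)"
    using assms(1,2) by (simp add: sum_ennreal[symmetric] nn_integral_sum del: sum_ennreal)
  also have "\<dots> \<le> (\<Sum>t\<in>A. ennreal (r t))"
    using assms(4) by (rule sum_mono)
  finally show ?thesis
    using assms(3) by (simp add: sum_ennreal)
qed

lemma nn_integral_add_le:
  fixes f h :: "'a \<Rightarrow> real"
  assumes "f \<in> borel_measurable M" "h \<in> borel_measurable M" "\<And>x. 0 \<le> f x" "\<And>x. 0 \<le> h x"
    and "0 \<le> r" "0 \<le> s"
    and "(\<integral>\<^sup>+ x. ennreal (f x) \<partial>M) \<le> ennreal r" "(\<integral>\<^sup>+ x. ennreal (h x) \<partial>M) \<le> ennreal s"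
  shows "(\<integral>\<^sup>+ x. ennreal (f x + h x) \<partial>M) \<le> ennreal (r + s)"
proof -
  have "(\<integral>\<^sup>+ x. ennreal (f x + h x) \<partial>M) = (\<integral>\<^sup>+ x. ennreal (f x) \<partial>M) + (\<integral>\<^sup>+ x. ennreal (h x) \<partial>M)"
    using assms(1-4) by (simp add: ennreal_plus nn_integral_add)
  also have "\<dots> \<le> ennreal r + ennreal s"
    using assms(7,8) by (rule add_mono)
  finally show ?thesis
    using assms(5,6) by (simp add: ennreal_plus)
qed

lemma discounted_sum_measurable:
  "(\<And>j. 1 \<le> j \<Longrightarrow> (\<lambda>x. f x j) \<in> borel_measurable M)
    \<Longrightarrow> (\<lambda>x. discounted_sum l (f x) k) \<in> borel_measurable M"
  unfolding discounted_sum_def by (intro borel_measurable_sum borel_measurable_times) auto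

lemma nn_integral_discounted_sum_le:
  fixes f :: "'a \<Rightarrow> nat \<Rightarrow> real"
  assumes "0 \<le> l"
    and "\<And>j. 1 \<le> j \<Longrightarrow> (\<lambda>x. f x j) \<in> borel_measurable M" "\<And>x j. 0 \<le> f x j" "\<And>j. 0 \<le> r j"
    and "\<And>j. 1 \<le> j \<Longrightarrow> (\<integral>\<^sup>+ x. ennreal (f x j) \<partial>M) \<le> ennreal (r j)"
  shows "(\<integral>\<^sup>+ x. ennreal (discounted_sum l (f x) k) \<partial>M) \<le> ennreal (discounted_sum l r k)"
  unfolding discounted_sum_def using assms
  by (intro nn_integral_sum_le nn_integral_cmult_le) auto

lemma running_avg_measurable:
  "(\<And>j. 1 \<le> j \<Longrightarrow> (\<lambda>x. b x j) \<in> borel_measurable M) \<Longrightarrow> (\<lambda>x. running_avg (b x) j) \<in> borel_measurable M"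
  by (induction j) auto

lemma nn_integral_running_avg_le:
  fixes b :: "'a \<Rightarrow> nat \<Rightarrow> real"
  assumes "\<And>j. 1 \<le> j \<Longrightarrow> (\<lambda>x. b x j) \<in> borel_measurable M" "\<And>x j. 0 \<le> b x j" "0 \<le> V"
    and "\<And>j. 1 \<le> j \<Longrightarrow> (\<integral>\<^sup>+ x. ennreal (b x j) \<partial>M) \<le> ennreal V"
  shows "(\<integral>\<^sup>+ x. ennreal (running_avg (b x) j) \<partial>M) \<le> ennreal V"
proof (induction j)
  case 0
  then show ?case by simp
next
  case (Suc j)
  define t where "t = 2 / (real j + 2)"
  have t: "0 \<le> t" "0 \<le> 1 - t"
    by (auto simp: t_def)
  have "(\<integral>\<^sup>+ x. ennreal ((1 - t) * running_avg (b x) j + t * b x (Suc j)) \<partial>M) \<le> ennreal ((1 - t) * V + t * V)"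
    using assms t Suc.IH
    by (intro nn_integral_add_le nn_integral_cmult_le running_avg_measurable running_avg_nonneg
        mult_nonneg_nonneg borel_measurable_times measurable_const) auto
  then show ?case
    by (simp add: t_def algebra_simps)
qed

lemma (in prob_space) nn_integral_identically_distributed_le:
  fixes h :: "'b \<Rightarrow> real"
  assumes "Y \<in> measurable M S" "Y0 \<in> measurable M S" "distr M S Y = distr M S Y0"
    and "h \<in> borel_measurable S" "\<And>s. 0 \<le> h s"
    and "integrable M (\<lambda>\<omega>. h (Y0 \<omega>))" "expectation (\<lambda>\<omega>. h (Y0 \<omega>)) \<le> b"
  shows "(\<integral>\<^sup>+ \<omega>. ennreal (h (Y \<omega>)) \<partial>M) \<le> ennreal b"
proof -
  have "(\<integral>\<^sup>+ \<omega>. ennreal (h (Y \<omega>)) \<partial>M) = (\<integral>\<^sup>+ s. ennreal (h s) \<partial>distr M S Y)"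
    using assms(1,4) by (simp add: nn_integral_distr)
  also have "\<dots> = (\<integral>\<^sup>+ \<omega>. ennreal (h (Y0 \<omega>)) \<partial>M)"
    using assms(2-4) by (simp add: nn_integral_distr)
  also have "\<dots> = ennreal (expectation (\<lambda>\<omega>. h (Y0 \<omega>)))"
    using assms(5,6) by (simp add: nn_integral_eq_integral)
  finally show ?thesis
    using assms(7) by (simp add: ennreal_leI)
qed

locale dmfw_random = prob_space M
  for M :: "'a measure" +
  fixes n :: nat and c :: "nat \<Rightarrow> nat \<Rightarrow> real" and g :: "nat \<Rightarrow> 'e::euclidean_space \<Rightarrow> 'b \<Rightarrow> 'e"
    and lmo :: "'e \<Rightarrow> 'e" and x1 :: "nat \<Rightarrow> 'e" and \<xi> :: "nat \<Rightarrow> nat \<Rightarrow> 'a \<Rightarrow> 'b"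
    and X :: "'e set" and SS :: "'b set" and D L l :: real and k0 :: nat and G :: real
  assumes path: "\<And>\<omega>. \<omega> \<in> space M \<Longrightarrow> dmfw_path n c g lmo x1 (\<lambda>k i. \<xi> k i \<omega>) X SS D L l k0"
    and sample_grad_measurable:
      "\<And>j i. 1 \<le> j \<Longrightarrow> i < n \<Longrightarrow> (\<lambda>\<omega>. g i (x1 i) (\<xi> j i \<omega>)) \<in> borel_measurable M"
    and sample_grad_moment: "\<And>j i. 1 \<le> j \<Longrightarrow> i < n \<Longrightarrow>
      (\<integral>\<^sup>+ \<omega>. ennreal ((norm (g i (x1 i) (\<xi> j i \<omega>)))\<^sup>2) \<partial>M) \<le> ennreal (G\<^sup>2)"
    and k0_pos: "1 \<le> k0"
begin

abbreviation "K \<equiv> dmfw_path.K n D L k0"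
abbreviation "grad_bound \<omega> \<equiv> dmfw_path.grad_bound n g x1 (\<lambda>k i. \<xi> k i \<omega>) D L k0"

lemma some_path: obtains \<omega> where "dmfw_path n c g lmo x1 (\<lambda>k i. \<xi> k i \<omega>) X SS D L l k0"
  using path not_empty by blast

lemma D_nonneg: "0 \<le> D" and L_nonneg: "0 \<le> L" and l_nonneg: "0 \<le> l"
  and l_le: "l \<le> (real k0 / (real k0 + 1))\<^sup>2"
  and K_nonneg: "0 \<le> K" and K_le: "K \<le> 2 * L * (D + 2 * (real k0 * sqrt (real n) * D))"
  by (use some_path in \<open>metis dmfw_path.D_nonneg dmfw_path.L_nonneg dmfw_path.l_nonneg
      dmfw_path.l_le dmfw_path.K_nonneg dmfw_path.K_le k0_pos\<close>)+

lemma grad_bound_eq: "\<omega> \<in> space M \<Longrightarrow> grad_bound \<omega> j i = norm (g i (x1 i) (\<xi> j i \<omega>)) + K"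
  by (rule dmfw_path.grad_bound_def[OF path])

lemma grad_bound_measurable: "1 \<le> j \<Longrightarrow> i < n \<Longrightarrow> (\<lambda>\<omega>. grad_bound \<omega> j i) \<in> borel_measurable M"
  using sample_grad_measurable by (simp add: grad_bound_eq cong: measurable_cong)

lemma nn_integral_grad_bound_sq_le:
  assumes "1 \<le> j" "i < n"
  shows "(\<integral>\<^sup>+ \<omega>. ennreal ((grad_bound \<omega> j i)\<^sup>2) \<partial>M) \<le> ennreal (2 * G\<^sup>2 + 2 * K\<^sup>2)"
proof -
  have "(a + K)\<^sup>2 \<le> 2 * a\<^sup>2 + 2 * K\<^sup>2" for a
    using sum_squares_bound[of a K] by (simp add: power2_sum)
  then have "(\<integral>\<^sup>+ \<omega>. ennreal ((grad_bound \<omega> j i)\<^sup>2) \<partial>M)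
      \<le> (\<integral>\<^sup>+ \<omega>. ennreal (2 * (norm (g i (x1 i) (\<xi> j i \<omega>)))\<^sup>2 + 2 * K\<^sup>2) \<partial>M)"
    by (intro nn_integral_mono ennreal_leI) (simp add: grad_bound_eq)
  also have "\<dots> \<le> ennreal (2 * G\<^sup>2 + 2 * K\<^sup>2)"
    using sample_grad_measurable[OF assms] sample_grad_moment[OF assms] emeasure_space_1
    by (intro nn_integral_add_le nn_integral_cmult_le) auto
  finally show ?thesis .
qed

lemma incr_bound_measurable:
  "1 \<le> j \<Longrightarrow>
    (\<lambda>\<omega>. 8 * (\<Sum>m<n. (grad_bound \<omega> j m)\<^sup>2 + running_avg (\<lambda>j. (grad_bound \<omega> j m)\<^sup>2) (j - 1))) \<in> borel_measurable M"
  using grad_bound_measurable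
  by (intro borel_measurable_times borel_measurable_sum borel_measurable_add borel_measurable_power
      running_avg_measurable measurable_const) auto

lemma nn_integral_incr_bound_le:
  assumes "1 \<le> j"
  shows "(\<integral>\<^sup>+ \<omega>. ennreal (8 * (\<Sum>m<n. (grad_bound \<omega> j m)\<^sup>2 + running_avg (\<lambda>j. (grad_bound \<omega> j m)\<^sup>2) (j - 1))) \<partial>M)
    \<le> ennreal (8 * (\<Sum>m<n. (2 * G\<^sup>2 + 2 * K\<^sup>2) + (2 * G\<^sup>2 + 2 * K\<^sup>2)))"
  using assms grad_bound_measurable nn_integral_grad_bound_sq_le
  by (intro nn_integral_cmult_le nn_integral_sum_le nn_integral_add_le nn_integral_running_avg_le
      borel_measurable_sum borel_measurable_add borel_measurable_power running_avg_measurable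
      running_avg_nonneg add_nonneg_nonneg sum_nonneg) auto

lemma sample_bound_sq_le:
  "2 * G\<^sup>2 + 2 * K\<^sup>2 \<le> 8 * (G\<^sup>2 + L\<^sup>2 * (D + 2 * (real k0 * sqrt (real n) * D))\<^sup>2)"
proof -
  have "K\<^sup>2 \<le> (2 * L * (D + 2 * (real k0 * sqrt (real n) * D)))\<^sup>2"
    by (rule power_mono[OF K_le K_nonneg])
  also have "\<dots> = 4 * (L\<^sup>2 * (D + 2 * (real k0 * sqrt (real n) * D))\<^sup>2)"
    by (simp add: power_mult_distrib)
  finally have "K\<^sup>2 \<le> 4 * (L\<^sup>2 * (D + 2 * (real k0 * sqrt (real n) * D))\<^sup>2)" .
  then show ?thesis
    using zero_le_power2[of G] by (smt (verit))
qed

lemma disagreement_constant_le: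
  "6 * real k0 ^ 3 / (real k + 2)\<^sup>2 * (8 * (\<Sum>m<n. (2 * G\<^sup>2 + 2 * K\<^sup>2) + (2 * G\<^sup>2 + 2 * K\<^sup>2)) * (real k0 + 1))
    \<le> 768 * real k0 ^ 3 * (real k0 + 1) * real n
      * (G\<^sup>2 + L\<^sup>2 * (D + 2 * (real k0 * sqrt (real n) * D))\<^sup>2) / (real k + 2)\<^sup>2"
proof -
  have "8 * (\<Sum>m<n. (2 * G\<^sup>2 + 2 * K\<^sup>2) + (2 * G\<^sup>2 + 2 * K\<^sup>2)) = 16 * real n * (2 * G\<^sup>2 + 2 * K\<^sup>2)"
    by simp
  also have "\<dots> \<le> 16 * real n * (8 * (G\<^sup>2 + L\<^sup>2 * (D + 2 * (real k0 * sqrt (real n) * D))\<^sup>2))"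
    using sample_bound_sq_le by (intro mult_left_mono) auto
  finally have "6 * real k0 ^ 3 / (real k + 2)\<^sup>2
      * (8 * (\<Sum>m<n. (2 * G\<^sup>2 + 2 * K\<^sup>2) + (2 * G\<^sup>2 + 2 * K\<^sup>2)) * (real k0 + 1))
    \<le> 6 * real k0 ^ 3 / (real k + 2)\<^sup>2
      * (16 * real n * (8 * (G\<^sup>2 + L\<^sup>2 * (D + 2 * (real k0 * sqrt (real n) * D))\<^sup>2)) * (real k0 + 1))"
    by (intro mult_left_mono mult_right_mono) auto
  then show ?thesis
    by (simp add: field_simps)
qed

lemma expected_disagreement_le:
  assumes "1 \<le> k" "i < n"
  shows "(\<integral>\<^sup>+ \<omega>. ennreal ((norm (dmfw_p n c g lmo x1 (\<lambda>k. 2 / (real k + 1)) (\<lambda>k. 2 / (real k + 2))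
        (\<lambda>k i. \<xi> k i \<omega>) k i - avg n (dmfw_y n c g lmo x1 (\<lambda>k. 2 / (real k + 1)) (\<lambda>k. 2 / (real k + 2))
        (\<lambda>k i. \<xi> k i \<omega>) k)))\<^sup>2) \<partial>M)
    \<le> ennreal (768 * real k0 ^ 3 * (real k0 + 1) * real n
        * (G\<^sup>2 + L\<^sup>2 * (D + 2 * (real k0 * sqrt (real n) * D))\<^sup>2) / (real k + 2)\<^sup>2)"
proof -
  define T where "T = discounted_sum l (\<lambda>j. 1 / (real j + 1)\<^sup>2) k"
  define V where "V = 8 * (\<Sum>m<n. (2 * G\<^sup>2 + 2 * K\<^sup>2) + (2 * G\<^sup>2 + 2 * K\<^sup>2))"
  define Z where "Z = (\<lambda>\<omega> j. 8 * (\<Sum>m<n. (grad_bound \<omega> j m)\<^sup>2 + running_avg (\<lambda>j. (grad_bound \<omega> j m)\<^sup>2) (j - 1)))"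
  have T: "0 \<le> T" "T \<le> 6 * real k0 ^ 3 / (real k + 2)\<^sup>2"
    unfolding T_def using discounted_sum_nonneg[OF l_nonneg] discounted_inv_sq_le[OF l_nonneg l_le k0_pos assms(1)]
    by auto
  have "(\<integral>\<^sup>+ \<omega>. ennreal ((norm (dmfw_p n c g lmo x1 (\<lambda>k. 2 / (real k + 1)) (\<lambda>k. 2 / (real k + 2))
        (\<lambda>k i. \<xi> k i \<omega>) k i - avg n (dmfw_y n c g lmo x1 (\<lambda>k. 2 / (real k + 1)) (\<lambda>k. 2 / (real k + 2))
        (\<lambda>k i. \<xi> k i \<omega>) k)))\<^sup>2) \<partial>M)
      \<le> (\<integral>\<^sup>+ \<omega>. ennreal (T * discounted_sum l (Z \<omega>) k) \<partial>M)"
    using dmfw_path.disagreement_sq_le[OF path assms] dmfw_path.ss_def[OF path] dmfw_path.ys_def[OF path]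
    by (intro nn_integral_mono ennreal_leI) (simp add: T_def Z_def dmfw_p_def)
  also have "\<dots> \<le> ennreal (T * discounted_sum l (\<lambda>_. V) k)"
    using T(1) nn_integral_incr_bound_le incr_bound_measurable
    by (intro nn_integral_cmult_le nn_integral_discounted_sum_le discounted_sum_nonneg
        discounted_sum_measurable l_nonneg)
      (auto simp: Z_def V_def intro!: sum_nonneg running_avg_nonneg add_nonneg_nonneg)
  also have "\<dots> \<le> ennreal (6 * real k0 ^ 3 / (real k + 2)\<^sup>2 * (V * (real k0 + 1)))"
  proof (intro ennreal_leI mult_mono T)
    show "discounted_sum l (\<lambda>_. V) k \<le> V * (real k0 + 1)"
      using discounted_sum_cmult[of l V "\<lambda>_. 1" k] discounted_sum_one_le[OF l_nonneg l_le]
      by (simp add: V_def mult_left_mono)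
  qed (auto simp: V_def intro!: discounted_sum_nonneg l_nonneg)
  also have "\<dots> \<le> ennreal (768 * real k0 ^ 3 * (real k0 + 1) * real n
        * (G\<^sup>2 + L\<^sup>2 * (D + 2 * (real k0 * sqrt (real n) * D))\<^sup>2) / (real k + 2)\<^sup>2)"
    unfolding V_def by (rule ennreal_leI disagreement_constant_le)+
  finally show ?thesis .
qed

end

lemma k0_of_spec:
  assumes "\<bar>lam\<bar> < 1"
  shows "1 \<le> k0_of lam" and "\<bar>lam\<bar> \<le> (real (k0_of lam) / (real (k0_of lam) + 1))\<^sup>2"
proof -
  obtain m :: nat where m: "2 / (1 - \<bar>lam\<bar>) < real m"
    using reals_Archimedean2 by blast
  have gap: "0 < 1 - \<bar>lam\<bar>"
    using assms by simp
  then have "0 < m"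
    using m by (metis divide_pos_pos of_nat_0_less_iff order_less_trans zero_less_numeral)
  define t where "t = 1 / (real m + 1)"
  have "2 < (1 - \<bar>lam\<bar>) * real m"
    using m gap by (simp add: field_simps)
  also have "\<dots> \<le> (1 - \<bar>lam\<bar>) * (real m + 1)"
    using gap by (intro mult_left_mono) auto
  finally have "2 * t < 1 - \<bar>lam\<bar>"
    by (simp add: t_def field_simps)
  moreover have "1 - 2 * t \<le> (1 - t)\<^sup>2"
    by (simp add: power2_eq_square algebra_simps)
  moreover have "real m / (real m + 1) = 1 - t"
    by (simp add: t_def field_simps)
  ultimately have "0 < m \<and> \<bar>lam\<bar> \<le> (real m / (real m + 1))\<^sup>2"
    using \<open>0 < m\<close> by simp
  then have "0 < k0_of lam \<and> \<bar>lam\<bar> \<le> (real (k0_of lam) / (real (k0_of lam) + 1))\<^sup>2"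
    unfolding k0_of_def by (rule LeastI)
  then show "1 \<le> k0_of lam" and "\<bar>lam\<bar> \<le> (real (k0_of lam) / (real (k0_of lam) + 1))\<^sup>2"
    by auto
qed

lemma two_mul_Suc_le_power:
  assumes "1 \<le> n" "1 \<le> k"
  shows "2 * (real k + 1) \<le> (4 * real n) ^ k"
  using assms(2)
proof (induction k rule: nat_induct_at_least)
  case base
  then show ?case using assms(1) by simp
next
  case (Suc k)
  have "2 * (real (Suc k) + 1) \<le> 4 * (2 * (real k + 1))"
    by simp
  also have "\<dots> \<le> (4 * real n) * (4 * real n) ^ k"
    using Suc.IH assms(1) by (intro mult_mono) auto
  finally show ?case by simp
qed

lemma dmfw_constant_le:
  fixes G L Z \<psi> \<psi>h :: real
  assumes "1 \<le> k0" "1 \<le> n" "0 < G" "0 \<le> L" "0 \<le> Z"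
    and "2 * G + 2 * L * Z \<le> \<psi>" "4 * L * Z * \<psi> + 4 * G * \<psi> + 8 * G\<^sup>2 + 8 * L\<^sup>2 * Z\<^sup>2 \<le> \<psi>h"
  shows "768 * real k0 ^ 3 * (real k0 + 1) * real n * (G\<^sup>2 + L\<^sup>2 * Z\<^sup>2)
    \<le> 4 * (real k0 ^ 3 * (4 * real n) ^ k0 * real n * (12 * L\<^sup>2 * Z\<^sup>2 + 12 * (G\<^sup>2 + \<psi>h)))"
proof -
  define W where "W = G\<^sup>2 + L\<^sup>2 * Z\<^sup>2"
  have "0 \<le> \<psi>"
    using assms(3-6) by (smt (verit) mult_nonneg_nonneg)
  then have "0 \<le> 4 * L * Z * \<psi> + 4 * G * \<psi>"
    using assms(3-5) by simp
  then have W: "0 \<le> W" "108 * W \<le> 12 * L\<^sup>2 * Z\<^sup>2 + 12 * (G\<^sup>2 + \<psi>h)"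
    using assms(7) by (auto simp: W_def)
  have "768 * real k0 ^ 3 * (real k0 + 1) * real n * W = 384 * real k0 ^ 3 * real n * W * (2 * (real k0 + 1))"
    by simp
  also have "\<dots> \<le> 432 * real k0 ^ 3 * real n * W * (4 * real n) ^ k0"
    using two_mul_Suc_le_power[OF assms(2,1)] W(1) by (intro mult_mono) auto
  also have "\<dots> = 4 * (real k0 ^ 3 * (4 * real n) ^ k0 * real n * (108 * W))"
    by simp
  also have "\<dots> \<le> 4 * (real k0 ^ 3 * (4 * real n) ^ k0 * real n * (12 * L\<^sup>2 * Z\<^sup>2 + 12 * (G\<^sup>2 + \<psi>h)))"
    using W(2) by (intro mult_left_mono) auto
  finally show ?thesis
    by (simp add: W_def)
qed

theorem lemma2:
  fixes M :: "'a measure" and S :: "'b measure"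
    and n :: nat and c :: "nat \<Rightarrow> nat \<Rightarrow> real" and E :: "(nat \<times> nat) set"
    and X :: "'e::euclidean_space set" and D L \<delta> G :: real
    and f :: "nat \<Rightarrow> 'e \<Rightarrow> 'b \<Rightarrow> real" and g :: "nat \<Rightarrow> 'e \<Rightarrow> 'b \<Rightarrow> 'e"
    and \<xi>0 :: "nat \<Rightarrow> 'a \<Rightarrow> 'b" and \<xi> :: "nat \<Rightarrow> nat \<Rightarrow> 'a \<Rightarrow> 'b"
    and lmo :: "'e \<Rightarrow> 'e" and x1 :: "nat \<Rightarrow> 'e"
  defines "lam \<equiv> slem n c"
  defines "k0 \<equiv> k0_of lam"
  defines "gam \<equiv> (\<lambda>k::nat. 2 / (real k + 1))"
  defines "eta \<equiv> (\<lambda>k::nat. 2 / (real k + 2))"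
  defines "F \<equiv> (\<lambda>i x. prob_space.expectation M (\<lambda>\<omega>. f i x (\<xi>0 i \<omega>)))"
  defines "gradF \<equiv> (\<lambda>i x. prob_space.expectation M (\<lambda>\<omega>. g i x (\<xi>0 i \<omega>)))"
  defines "y \<equiv> (\<lambda>k i \<omega>. dmfw_y n c g lmo x1 gam eta (\<lambda>k' i'. \<xi> k' i' \<omega>) k i)"
  defines "p \<equiv> (\<lambda>k i \<omega>. dmfw_p n c g lmo x1 gam eta (\<lambda>k' i'. \<xi> k' i' \<omega>) k i)"
  defines "C1 \<equiv> real k0 * sqrt (real n) * D"
  defines "\<psi> \<equiv> max (Max ((\<lambda>i. prob_space.expectation M (\<lambda>\<omega>. norm (y 1 i \<omega>))) ` {..<n}))
                    (2 * G + 2 * L * (D + 2 * C1))"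
  defines "\<psi>h \<equiv> max (Max ((\<lambda>i. prob_space.expectation M (\<lambda>\<omega>. (norm (y 1 i \<omega>))\<^sup>2)) ` {..<n}))
                    (4 * L * (D + 2 * C1) * \<psi> + 4 * G * \<psi> + 8 * G\<^sup>2 + 8 * L\<^sup>2 * (D + 2 * C1)\<^sup>2)"
  defines "C2 \<equiv> real k0 ^ 3 * (4 * real n) ^ k0 * real n
                  * (12 * L\<^sup>2 * (D + 2 * C1)\<^sup>2 + 12 * (G\<^sup>2 + \<psi>h))"
  assumes M: "prob_space M"
    and n2: "2 \<le> n"
    and E_sub: "E \<subseteq> {..<n} \<times> {..<n}"
    and E_sym: "sym E"
    and E_conn: "\<forall>i<n. \<forall>j<n. (i, j) \<in> E\<^sup>*"
    and c_nonneg: "\<forall>i<n. \<forall>j<n. 0 \<le> c i j"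
    and c_graph: "\<forall>i<n. \<forall>j<n. j \<noteq> i \<and> (i, j) \<notin> E \<longrightarrow> c i j = 0"
    and c_row: "\<forall>i<n. (\<Sum>j<n. c i j) = 1"
    and c_col: "\<forall>j<n. (\<Sum>i<n. c i j) = 1"
    and lam_lt1: "\<bar>lam\<bar> < 1"
    and contract: "\<forall>v :: nat \<Rightarrow> 'e.
        sqrt (\<Sum>i<n. (norm (mix n c v i - avg n v))\<^sup>2) \<le> \<bar>lam\<bar> * sqrt (\<Sum>i<n. (norm (v i - avg n v))\<^sup>2)"
    and X_convex: "convex X" and X_compact: "compact X"
    and X_diam: "\<forall>x\<in>X. \<forall>x'\<in>X. norm (x - x') \<le> D"
  \<comment> \<open>random variables: \<xi>0 i is \<xi>^i, \<xi> k i is the sample \<xi>_k^i\<close>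
    and \<xi>0_meas: "\<forall>i<n. \<xi>0 i \<in> measurable M S"
    and \<xi>_meas: "\<forall>k\<ge>1. \<forall>i<n. \<xi> k i \<in> measurable M S"
    and \<xi>_distr: "\<forall>k\<ge>1. \<forall>i<n. distr M S (\<xi> k i) = distr M S (\<xi>0 i)"
    and \<xi>_indep: "prob_space.indep_vars M (\<lambda>_. S) (\<lambda>(k, i). \<xi> k i) ({1..} \<times> {..<n})"
    and g_meas: "\<forall>i<n. (\<lambda>(x, s). g i x s) \<in> borel_measurable (borel \<Otimes>\<^sub>M S)"
    and f_grad: "\<forall>i<n. \<forall>s\<in>space S. \<forall>x.
        ((\<lambda>z. f i z s) has_derivative (\<lambda>h. g i x s \<bullet> h)) (at x)"
    and g_lip: "\<forall>i<n. \<forall>s\<in>space S. \<forall>x x'. norm (g i x s - g i x' s) \<le> L * norm (x - x')"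
    and f_int: "\<forall>i<n. \<forall>x. integrable M (\<lambda>\<omega>. f i x (\<xi>0 i \<omega>))"
    and g_int: "\<forall>i<n. \<forall>x. integrable M (\<lambda>\<omega>. g i x (\<xi>0 i \<omega>))"
    and F_grad: "\<forall>i<n. \<forall>x. (F i has_derivative (\<lambda>h. gradF i x \<bullet> h)) (at x)"
    and gradF_lip: "\<forall>i<n. \<forall>x x'. norm (gradF i x - gradF i x') \<le> L * norm (x - x')"
    and var_bound: "\<forall>i<n. \<forall>x\<in>X.
        integrable M (\<lambda>\<omega>. (norm (gradF i x - g i x (\<xi>0 i \<omega>)))\<^sup>2) \<and>
        prob_space.expectation M (\<lambda>\<omega>. (norm (gradF i x - g i x (\<xi>0 i \<omega>)))\<^sup>2) \<le> \<delta>\<^sup>2"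
    and G_pos: "0 < G"
    and G_bound2: "\<forall>i<n. \<forall>x\<in>X.
        integrable M (\<lambda>\<omega>. (norm (g i x (\<xi>0 i \<omega>)))\<^sup>2) \<and>
        prob_space.expectation M (\<lambda>\<omega>. (norm (g i x (\<xi>0 i \<omega>)))\<^sup>2) \<le> G\<^sup>2"
    and G_bound1: "\<forall>i<n. \<forall>x\<in>X. prob_space.expectation M (\<lambda>\<omega>. norm (g i x (\<xi>0 i \<omega>))) \<le> G"
  \<comment> \<open>linear minimisation oracle: a (measurable) selection of argmin_{phi in X} <p, phi>\<close>
    and lmo_meas: "lmo \<in> borel_measurable borel"
    and lmo_in: "\<forall>q. lmo q \<in> X"
    and lmo_min: "\<forall>q. \<forall>\<phi>\<in>X. q \<bullet> lmo q \<le> q \<bullet> \<phi>"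
    and x1_in: "\<forall>i<n. x1 i \<in> X"
  shows "\<forall>i<n. \<forall>k\<ge>1.
      (\<integral>\<^sup>+ \<omega>. ennreal ((norm (p k i \<omega> - avg n (\<lambda>j. y k j \<omega>)))\<^sup>2) \<partial>M)
        \<le> ennreal (4 * C2 / (real k + 2)\<^sup>2)"
proof (intro allI impI)
  fix i k :: nat
  assume i: "i < n" and k: "1 \<le> k"
  interpret prob_space M
    by (rule M)
  have k0: "1 \<le> k0" and lam_le: "\<bar>lam\<bar> \<le> (real k0 / (real k0 + 1))\<^sup>2"
    unfolding k0_def using k0_of_spec[OF lam_lt1] by auto
  have path: "dmfw_path n c g lmo x1 (\<lambda>k i. \<xi> k i \<omega>) X (space S) D L \<bar>lam\<bar> k0" if "\<omega> \<in> space M" for \<omega>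
    using that n2 c_nonneg c_row c_col contract lam_le X_convex X_diam lmo_in x1_in g_lip
      measurable_space[OF \<xi>_meas[rule_format]]
    by unfold_locales (auto simp: net_norm_def L2_set_def)
  have g_sample: "(\<lambda>s. g i' (x1 i') s) \<in> borel_measurable S" if "i' < n" for i'
    using g_meas that by (intro measurable_Pair_compose_split[of "g i'"]) auto
  have moment: "(\<integral>\<^sup>+ \<omega>. ennreal ((norm (g i' (x1 i') (\<xi> j i' \<omega>)))\<^sup>2) \<partial>M) \<le> ennreal (G\<^sup>2)"
    if "1 \<le> j" "i' < n" for j i'
    using \<xi>_meas \<xi>0_meas \<xi>_distr G_bound2 x1_in g_sample that
    by (intro nn_integral_identically_distributed_le[of "\<xi> j i'" S "\<xi>0 i'"]) auto
  have meas: "(\<lambda>\<omega>. g i' (x1 i') (\<xi> j i' \<omega>)) \<in> borel_measurable M" if "1 \<le> j" "i' < n" for j i'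
    using \<xi>_meas that by (intro measurable_compose[OF _ g_sample[OF that(2)]]) simp
  interpret dmfw_random M n c g lmo x1 \<xi> X "space S" D L "\<bar>lam\<bar>" k0 G
    by (rule dmfw_random.intro[OF M dmfw_random_axioms.intro[OF path meas moment k0]])
  have "2 * G + 2 * L * (D + 2 * C1) \<le> \<psi>"
    and "4 * L * (D + 2 * C1) * \<psi> + 4 * G * \<psi> + 8 * G\<^sup>2 + 8 * L\<^sup>2 * (D + 2 * C1)\<^sup>2 \<le> \<psi>h"
    and "0 \<le> D + 2 * C1"
    unfolding \<psi>_def \<psi>h_def C1_def using D_nonneg by simp_all
  then have "768 * real k0 ^ 3 * (real k0 + 1) * real n * (G\<^sup>2 + L\<^sup>2 * (D + 2 * C1)\<^sup>2) \<le> 4 * C2"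
    unfolding C2_def using n2 G_pos L_nonneg by (intro dmfw_constant_le[OF k0]) simp_all
  then show "(\<integral>\<^sup>+ \<omega>. ennreal ((norm (p k i \<omega> - avg n (\<lambda>j. y k j \<omega>)))\<^sup>2) \<partial>M)
      \<le> ennreal (4 * C2 / (real k + 2)\<^sup>2)"
    using expected_disagreement_le[OF k i] unfolding p_def y_def gam_def eta_def C1_def
    by (auto elim!: order_trans intro!: ennreal_leI divide_right_mono)
qed

end
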